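(* Let $r,m\ge0$ and $k\ge1$ be integers and $n\ge0$. Then $$\lim_{q\to1}\frac{\sum_{j=0}^{2n}(-1)^jq^{rj^2+mj}\begin{bmatrix} 2n\\ j\end{bmatrix}_{q^k}}{(q;q^2)_n}=(k-2r)^n.$$
   Context: $(x;q)_n=\prod_{j=0}^{n-1}(1-q^jx)$. The Gaussian binomial coefficient is $\begin{bmatrix} n\\ j\end{bmatrix}_q=\frac{(q;q)_n}{(q;q)_j(q;q)_{n-j}}$ for $0\le j\le n$, a polynomial in $q$; $\begin{bmatrix} n\\ j\end{bmatrix}_{q^k}$ is this with $q$ replaced by $q^k$. The quotient is a rational function of $q$ and the limit is taken as $q\to1$. *)

theory Defs
  imports "HOL-Analysis.Analysis"
begin

definition qpoch :: "real \<Rightarrow> real \<Rightarrow> nat \<Rightarrow> real" where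
  "qpoch x q n = (\<Prod>j<n. 1 - q ^ j * x)"

definition qbinom :: "nat \<Rightarrow> nat \<Rightarrow> real \<Rightarrow> real" where
  "qbinom n j q = qpoch q q n / (qpoch q q j * qpoch q q (n - j))"

end

theory Submission
  imports Defs "HOL-Computational_Algebra.Polynomial"
begin

text \<open>Put \<open>x = 1 - q\<close> and let \<open>S(N, m)\<close> be the alternating sum with \<open>2n\<close> replaced by \<open>N\<close>.
  The q-Pascal rule gives \<open>S(N+1, m) = S(N, m+k) - q\<^sup>r\<^sup>+\<^sup>m S(N, m+2r)\<close>, so \<open>S(N, m)\<close> is a polynomial
  in \<open>x\<close> whose coefficient of \<open>x\<^sup>i\<close> is a polynomial in \<open>m\<close>. Induction on \<open>N\<close> shows that this
  coefficient has degree at most \<open>2i - N\<close> in \<open>m\<close>: the difference \<open>p(m+k) - p(m+2r)\<close> lowers the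
  degree by one and multiplies the top coefficient by \<open>(2i - N)(k - 2r)\<close>, and among the other terms
  only the linear one of \<open>(1 - x)\<^sup>r\<^sup>+\<^sup>m\<close> reaches the top degree. Solving the resulting recursion for
  the top coefficients gives \<open>S(2n, m) = x\<^sup>n ((2n-1)!! (k - 2r)\<^sup>n + O(x))\<close>, while
  \<open>(q;q\<^sup>2)\<^sub>n = x\<^sup>n ((2n-1)!! + O(x))\<close>.\<close>

section \<open>Polynomials up to lower-order terms\<close>

text \<open>A negative \<open>d\<close> forces \<open>p = 0\<close> and \<open>c = 0\<close>,
  which makes the rules below hold without side conditions on signs of degrees.\<close>

definition top_term :: "'a::zero poly \<Rightarrow> int \<Rightarrow> 'a \<Rightarrow> bool" where
  "top_term p d c \<longleftrightarrow>
     (\<forall>e. d \<le> int e \<longrightarrow> coeff p e = (if int e = d then c else 0)) \<and> (d < 0 \<longrightarrow> c = 0)"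

lemma top_term_nat: "top_term p (int d) c \<longleftrightarrow> (\<forall>e\<ge>d. coeff p e = (if e = d then c else 0))"
  by (auto simp: top_term_def)

lemma top_term_neg: "d < 0 \<Longrightarrow> top_term p d c \<longleftrightarrow> p = 0 \<and> c = 0"
  by (auto simp: top_term_def poly_eq_iff)

lemma top_term_cases:
  assumes "top_term p d c"
  obtains e where "d = int e" "\<forall>j\<ge>e. coeff p j = (if j = e then c else 0)"
  | "d < 0" "p = 0" "c = 0"
  using assms by (metis nonneg_int_cases not_le top_term_nat top_term_neg)

lemma top_term_0 [simp]: "top_term 0 d 0"
  by (simp add: top_term_def)

lemma top_term_const: "top_term [:c:] 0 c"
  by (auto simp: top_term_def coeff_pCons split: nat.split)

lemma top_term_1 [simp]: "top_term 1 0 1"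
  using top_term_const[of 1] by (simp add: one_pCons)

lemma top_term_0_iff: "top_term p 0 c \<longleftrightarrow> p = [:c:]"
  using top_term_nat[of p 0 c] by (simp add: poly_eq_iff coeff_pCons')

lemma top_term_degree: "top_term p (int e) c \<Longrightarrow> degree p \<le> e"
  by (auto simp: top_term_nat intro: degree_le)

lemma top_term_raise:
  assumes "top_term p d c" "d < d'"
  shows "top_term p d' 0"
  using assms by (auto simp: top_term_def)

lemma top_term_add:
  assumes "top_term p d a" "top_term q d b"
  shows "top_term (p + q) d (a + b)"
  using assms by (auto simp: top_term_def)

lemma top_term_uminus:
  fixes p :: "'a::ab_group_add poly"
  shows "top_term p d a \<Longrightarrow> top_term (- p) d (- a)"
  by (auto simp: top_term_def)

lemma top_term_diff:
  fixes p :: "'a::ab_group_add poly"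
  assumes "top_term p d a" "top_term q d b"
  shows "top_term (p - q) d (a - b)"
  using top_term_add[OF assms(1) top_term_uminus[OF assms(2)]] by simp

lemma top_term_sum:
  "(\<And>x. x \<in> A \<Longrightarrow> top_term (f x) d (c x)) \<Longrightarrow> top_term (\<Sum>x\<in>A. f x) d (\<Sum>x\<in>A. c x)"
  by (induction A rule: infinite_finite_induct) (auto intro: top_term_add)

lemma top_term_smult:
  fixes p :: "'a::comm_semiring_0 poly"
  shows "top_term p d c \<Longrightarrow> top_term (smult a p) d (a * c)"
  by (auto simp: top_term_def)

lemma top_term_mult:
  fixes p q :: "'a::comm_semiring_0 poly"
  assumes p: "top_term p d1 c1" and q: "top_term q d2 c2"
  shows "top_term (p * q) (d1 + d2) (c1 * c2)"
proof -
  have "top_term (p * q) (int (e1 + e2)) (c1 * c2)"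
    if e1: "\<forall>j\<ge>e1. coeff p j = (if j = e1 then c1 else 0)"
      and e2: "\<forall>j\<ge>e2. coeff q j = (if j = e2 then c2 else 0)" for e1 e2
    unfolding top_term_nat
  proof (intro allI impI)
    fix e assume "e1 + e2 \<le> e"
    then have "coeff p j * coeff q (e - j) = (if j = e1 then c1 * (if e = e1 + e2 then c2 else 0) else 0)"
      if "j \<le> e" for j
      using e1 e2 that by (cases j e1 rule: linorder_cases) auto
    then have "coeff (p * q) e = (\<Sum>j\<le>e. if j = e1 then c1 * (if e = e1 + e2 then c2 else 0) else 0)"
      by (simp add: coeff_mult)
    then show "coeff (p * q) e = (if e = e1 + e2 then c1 * c2 else 0)"
      using \<open>e1 + e2 \<le> e\<close> by simp
  qed
  with p q show ?thesis
    by (cases rule: top_term_cases[OF p]; cases rule: top_term_cases[OF q]) auto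
qed

lemma top_term_prod:
  fixes f :: "'i \<Rightarrow> 'a::comm_semiring_1 poly"
  shows "(\<And>x. x \<in> A \<Longrightarrow> top_term (f x) (d x) (c x)) \<Longrightarrow>
    top_term (\<Prod>x\<in>A. f x) (\<Sum>x\<in>A. d x) (\<Prod>x\<in>A. c x)"
  by (induction A rule: infinite_finite_induct)
    (auto intro: top_term_mult)

lemma coeff_pcompose_shift_degree:
  fixes p :: "'a::comm_semiring_1 poly"
  shows "degree p \<le> e \<Longrightarrow> coeff (pcompose p [:\<alpha>, 1:]) e = coeff p e"
proof (induction p arbitrary: e)
  case (pCons a p)
  show ?case
  proof (cases e)
    case (Suc e')
    then have deg: "degree p \<le> e'"
      using pCons.prems by (cases "p = 0") auto
    have "coeff (pcompose p [:\<alpha>, 1:]) (Suc e') = 0"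
      using deg degree_pcompose_le[of p "[:\<alpha>, 1:]"] by (intro coeff_eq_0) auto
    with pCons.IH[OF deg] Suc show ?thesis by (simp add: pcompose_pCons)
  qed (use pCons.prems in \<open>simp add: pcompose_pCons split: if_splits\<close>)
qed simp

lemma coeff_pcompose_shift_below_degree:
  fixes p :: "'a::comm_semiring_1 poly"
  shows "degree p \<le> Suc e \<Longrightarrow>
    coeff (pcompose p [:\<alpha>, 1:]) e = coeff p e + of_nat (Suc e) * \<alpha> * coeff p (Suc e)"
proof (induction p arbitrary: e)
  case (pCons a p)
  then have deg: "degree p \<le> e" by (cases "p = 0") auto
  show ?case
  proof (cases e)
    case 0
    then show ?thesis using coeff_pcompose_shift_degree[OF deg] deg by (simp add: pcompose_pCons)
  next
    case (Suc e')
    then show ?thesis using pCons.IH[of e'] coeff_pcompose_shift_degree[OF deg] deg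
      by (simp add: pcompose_pCons algebra_simps)
  qed
qed simp

lemma top_term_pcompose_shift:
  fixes p :: "'a::comm_semiring_1 poly"
  assumes "top_term p d c"
  shows "top_term (pcompose p [:\<alpha>, 1:]) d c"
  using assms
proof (cases rule: top_term_cases)
  case (1 e)
  have "coeff (pcompose p [:\<alpha>, 1:]) j = coeff p j" if "e \<le> j" for j
    using top_term_degree[of p e c] assms 1 that by (intro coeff_pcompose_shift_degree) auto
  with 1 show ?thesis by (simp add: top_term_nat)
qed simp

lemma top_term_pcompose_shift_diff:
  fixes p :: "'a::comm_ring_1 poly"
  assumes "top_term p d c"
  shows "top_term (pcompose p [:\<alpha>, 1:] - pcompose p [:\<beta>, 1:]) (d - 1) (of_int d * (\<alpha> - \<beta>) * c)"
  using assms
proof (cases rule: top_term_cases)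
  case (1 e)
  note deg = top_term_degree[OF assms[unfolded 1]]
  show ?thesis
  proof (cases e)
    case 0
    then show ?thesis using 1 assms by (simp add: top_term_0_iff top_term_neg)
  next
    case (Suc e')
    have "coeff (pcompose p [:\<alpha>, 1:] - pcompose p [:\<beta>, 1:]) j
        = (if j = e' then of_nat e * (\<alpha> - \<beta>) * c else 0)" if "e' \<le> j" for j
    proof (cases "j = e'")
      case True
      then show ?thesis using coeff_pcompose_shift_below_degree[of p j] deg 1 Suc
        by (simp add: algebra_simps)
    next
      case False
      then show ?thesis using coeff_pcompose_shift_degree[of p j] deg Suc that by simp
    qed
    then show ?thesis using 1 Suc by (simp add: top_term_nat)
  qed
qed simp

definition binom_poly :: "nat \<Rightarrow> 'a::field_char_0 poly" where
  "binom_poly a = smult (inverse (fact a)) (\<Prod>t<a. [:- of_nat t, 1:])"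

lemma poly_binom_poly: "poly (binom_poly a) (of_nat y) = (of_nat (y choose a) :: 'a::field_char_0)"
  by (simp add: binom_poly_def poly_prod binomial_gbinomial gbinomial_prod_rev atLeast0LessThan
      field_simps)

lemma top_term_binom_poly: "top_term (binom_poly a :: 'a::field_char_0 poly) (int a) (inverse (fact a))"
proof -
  have "top_term [:- of_nat t, 1 :: 'a:] 1 1" for t
    by (auto simp: top_term_def coeff_pCons' )
  then have "top_term (\<Prod>t<a. [:- of_nat t, 1 :: 'a:]) (\<Sum>t<a. 1) (\<Prod>t<a. 1)"
    by (intro top_term_prod)
  then show ?thesis
    unfolding binom_poly_def using top_term_smult by fastforce
qed

lemma top_term_binom_poly_mult:
  fixes p :: "'a::field_char_0 poly"
  assumes "top_term p (2 * int (i - a) - int N) c" "a \<in> {1..i}"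
  shows "top_term (smult ((-1) ^ a) (pcompose (binom_poly a) [:\<alpha>, 1:]) * pcompose p [:\<beta>, 1:])
    (2 * int i - int N - 1) (if a = 1 then - c else 0)"
proof -
  let ?q = "smult ((-1) ^ a) (pcompose (binom_poly a) [:\<alpha>, 1:]) * pcompose p [:\<beta>, 1:]"
  have "top_term ?q (int a + (2 * int (i - a) - int N)) ((-1) ^ a * inverse (fact a) * c)"
    by (intro top_term_mult top_term_smult top_term_pcompose_shift top_term_binom_poly assms(1))
  moreover have "int a + (2 * int (i - a) - int N) = 2 * int i - int N - int a"
    using assms(2) by simp
  ultimately have deg: "top_term ?q (2 * int i - int N - int a) ((-1) ^ a * inverse (fact a) * c)"
    by simp
  show ?thesis
  proof (cases "a = 1")
    case False
    with assms(2) have "2 * int i - int N - int a < 2 * int i - int N - 1" by simp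
    with False show ?thesis using top_term_raise[OF deg] by simp
  qed (use deg in simp)
qed

lemma coeff_one_minus_power: "coeff ([:1, -1:] ^ y) a = (-1) ^ a * (of_nat (y choose a) :: 'a::comm_ring_1)"
proof (cases "a \<le> y")
  case True
  then show ?thesis by (simp add: coeff_linear_poly_power)
next
  case False
  then have "coeff ([:1, -1 :: 'a:] ^ y) a = 0"
    by (intro coeff_eq_0 le_less_trans[OF degree_power_le]) auto
  with False show ?thesis by (simp add: binomial_eq_0)
qed

section \<open>Gaussian binomials and the alternating q-sum\<close>

lemma qpoch_Suc: "qpoch x q (Suc n) = qpoch x q n * (1 - q ^ n * x)"
  by (simp add: qpoch_def)

lemma qpoch_self_nonzero:
  assumes "\<bar>p\<bar> \<noteq> 1"
  shows "qpoch p p n \<noteq> 0"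
proof -
  have "1 - p ^ j * p \<noteq> 0" for j
    using assms power_eq_1_iff[of p "Suc j"] by (auto simp: algebra_simps)
  then show ?thesis by (simp add: qpoch_def)
qed

lemma qbinom_0_right: "\<bar>p\<bar> \<noteq> 1 \<Longrightarrow> qbinom N 0 p = 1"
  using qpoch_self_nonzero[of p N] by (simp add: qbinom_def qpoch_def)

lemma qbinom_diag: "\<bar>p\<bar> \<noteq> 1 \<Longrightarrow> qbinom N N p = 1"
  using qpoch_self_nonzero[of p N] by (simp add: qbinom_def qpoch_def)

lemma qbinom_Suc_Suc:
  assumes "\<bar>p\<bar> \<noteq> 1" "i < N"
  shows "qbinom (Suc N) (Suc i) p = qbinom N i p + p ^ Suc i * qbinom N (Suc i) p"
proof -
  define l where "l = N - Suc i"
  have N: "N = Suc (i + l)" using assms(2) by (simp add: l_def)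
  define A B C where "A = qpoch p p N" and "B = qpoch p p i" and "C = qpoch p p l"
  define x y where "x = p ^ Suc i" and "y = p ^ Suc l"
  have xy: "p ^ N * p = x * y" by (simp add: N x_def y_def power_add)
  have nz: "A \<noteq> 0" "B \<noteq> 0" "C \<noteq> 0" "1 - x \<noteq> 0" "1 - y \<noteq> 0"
    using qpoch_self_nonzero[OF assms(1)] qpoch_Suc[of p p i] qpoch_Suc[of p p l]
    by (auto simp: A_def B_def C_def x_def y_def mult.commute)
  have "qbinom (Suc N) (Suc i) p = A * (1 - x * y) / (B * (1 - x) * (C * (1 - y)))"
    by (simp add: qbinom_def qpoch_Suc N A_def B_def C_def x_def y_def power_add mult.commute)
  also have "\<dots> = A / (B * (C * (1 - y))) + x * (A / (B * (1 - x) * C))"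
    using nz by (simp add: divide_simps) (simp add: algebra_simps)
  also have "\<dots> = qbinom N i p + p ^ Suc i * qbinom N (Suc i) p"
    by (simp add: qbinom_def qpoch_Suc N A_def B_def C_def x_def y_def mult.commute)
  finally show ?thesis .
qed

lemma qbinom_Suc:
  assumes "\<bar>p\<bar> \<noteq> 1" "j \<le> Suc N"
  shows "qbinom (Suc N) j p =
    (if j \<le> N then p ^ j * qbinom N j p else 0) + (if j = 0 then 0 else qbinom N (j - 1) p)"
proof -
  consider "j = 0" | "j = Suc N" | i where "j = Suc i" "i < N"
    using assms(2) by (cases j) (auto simp: le_less)
  then show ?thesis
    by cases (use assms(1) in \<open>simp_all add: qbinom_0_right qbinom_diag qbinom_Suc_Suc\<close>)
qed

definition qsum :: "nat \<Rightarrow> nat \<Rightarrow> nat \<Rightarrow> nat \<Rightarrow> real \<Rightarrow> real" where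
  "qsum r k N m q = (\<Sum>j=0..N. (-1) ^ j * q ^ (r * j\<^sup>2 + m * j) * qbinom N j (q ^ k))"

lemma qsum_Suc:
  assumes "\<bar>q\<bar> \<noteq> 1" "k \<ge> 1"
  shows "qsum r k (Suc N) m q = qsum r k N (m + k) q - q ^ (r + m) * qsum r k N (m + 2 * r) q"
proof -
  define p where "p = q ^ k"
  have p: "\<bar>p\<bar> \<noteq> 1"
    using assms power_eq_1_iff[of "\<bar>q\<bar>" k] by (auto simp: p_def power_abs)
  define t where "t j = (-1) ^ j * q ^ (r * j\<^sup>2 + m * j)" for j
  have t_p: "t j * (q ^ k) ^ j = (-1) ^ j * q ^ (r * j\<^sup>2 + (m + k) * j)" for j
    by (simp add: t_def algebra_simps flip: power_mult power_add)
  have t_Suc: "t (Suc j) = - (q ^ (r + m) * ((-1) ^ j * q ^ (r * j\<^sup>2 + (m + 2 * r) * j)))" for j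
  proof -
    have "r * (Suc j)\<^sup>2 + m * Suc j = (r + m) + (r * j\<^sup>2 + (m + 2 * r) * j)"
      by (simp add: power2_eq_square algebra_simps)
    then have "q ^ (r * (Suc j)\<^sup>2 + m * Suc j) = q ^ (r + m) * q ^ (r * j\<^sup>2 + (m + 2 * r) * j)"
      by (metis power_add)
    then show ?thesis by (simp add: t_def)
  qed
  have "qsum r k (Suc N) m q = (\<Sum>j=0..Suc N. t j * qbinom (Suc N) j p)"
    by (simp add: qsum_def t_def p_def)
  also have "\<dots> = (\<Sum>j=0..Suc N. t j * (if j \<le> N then p ^ j * qbinom N j p else 0))
      + (\<Sum>j=0..Suc N. t j * (if j = 0 then 0 else qbinom N (j - 1) p))"
    by (simp add: qbinom_Suc[OF p] distrib_left sum.distrib)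
  also have "(\<Sum>j=0..Suc N. t j * (if j \<le> N then p ^ j * qbinom N j p else 0)) = qsum r k N (m + k) q"
  proof -
    have "(\<Sum>j=0..Suc N. t j * (if j \<le> N then p ^ j * qbinom N j p else 0))
        = (\<Sum>j=0..N. t j * p ^ j * qbinom N j p)"
      by (simp add: mult.assoc)
    also have "\<dots> = qsum r k N (m + k) q"
      by (simp only: qsum_def p_def t_p)
    finally show ?thesis .
  qed
  also have "(\<Sum>j=0..Suc N. t j * (if j = 0 then 0 else qbinom N (j - 1) p))
      = (\<Sum>j=0..N. t (Suc j) * qbinom N j p)"
    by (simp only: sum.atLeast0_atMost_Suc_shift) simp
  also have "\<dots> = - (q ^ (r + m) * qsum r k N (m + 2 * r) q)"
    by (simp add: qsum_def t_Suc p_def sum_distrib_left sum_negf mult.assoc)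
  finally show ?thesis by simp
qed

fun qsum_poly :: "nat \<Rightarrow> nat \<Rightarrow> nat \<Rightarrow> nat \<Rightarrow> real poly" where
  "qsum_poly r k 0 m = 1"
| "qsum_poly r k (Suc N) m =
     qsum_poly r k N (m + k) - [:1, -1:] ^ (r + m) * qsum_poly r k N (m + 2 * r)"

lemma poly_qsum_poly:
  assumes "\<bar>q\<bar> \<noteq> 1" "k \<ge> 1"
  shows "poly (qsum_poly r k N m) (1 - q) = qsum r k N m q"
proof (induction N arbitrary: m)
  case 0
  then show ?case by (simp add: qsum_def qbinom_def qpoch_def)
next
  case (Suc N)
  then show ?case by (simp add: qsum_Suc[OF assms])
qed

section \<open>Coefficients as polynomials in the exponent shift\<close>

definition odd_fact :: "nat \<Rightarrow> nat" where
  "odd_fact n = (\<Prod>j<n. 2 * j + 1)"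

lemma odd_fact_Suc: "odd_fact (Suc n) = (2 * n + 1) * odd_fact n"
  by (simp add: odd_fact_def)

definition qsum_top_coeff :: "real \<Rightarrow> nat \<Rightarrow> nat \<Rightarrow> real" where
  "qsum_top_coeff d N i =
     (if N \<le> 2 * i then real (N choose (2 * i - N)) * real (odd_fact (N - i)) * d ^ (N - i) else 0)"

lemma qsum_top_coeff_Suc:
  "qsum_top_coeff d (Suc N) i =
     (2 * real i - real N) * d * qsum_top_coeff d N i
     + (if i = 0 then 0 else qsum_top_coeff d N (i - 1))"
proof -
  consider "2 * i \<le> N" | "2 * i = Suc N" | "Suc N < i" | "i = Suc N"
    | j e where "N = 2 * j + e + 2" "i = j + e + 2"
  proof -
    assume *: "2 * i \<le> N \<Longrightarrow> thesis" "2 * i = Suc N \<Longrightarrow> thesis" "Suc N < i \<Longrightarrow> thesis"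
      "i = Suc N \<Longrightarrow> thesis" "\<And>j e. N = 2 * j + e + 2 \<Longrightarrow> i = j + e + 2 \<Longrightarrow> thesis"
    show thesis
    proof (cases "N + 2 \<le> 2 * i \<and> i \<le> N")
      case True
      then show thesis by (intro *(5)[of "N - i" "2 * i - N - 2"]) auto
    qed (use * in linarith)
  qed
  then show ?thesis
  proof cases
    case 1
    then show ?thesis by (auto simp: qsum_top_coeff_def)
  next
    case 2
    then obtain j where "i = Suc j" "N = 2 * j + 1" by (cases i) auto
    then show ?thesis by (simp add: qsum_top_coeff_def odd_fact_Suc algebra_simps)
  next
    case 3
    then show ?thesis by (simp add: qsum_top_coeff_def binomial_eq_0)
  next
    case 4
    then show ?thesis by (simp add: qsum_top_coeff_def)
  next
    case (5 j e)
    have "Suc (Suc e) * (N choose Suc (Suc e)) = Suc (2 * j) * (N choose Suc e)"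
      using Suc_times_binomial_add[of "Suc e" "2 * j"] 5 by (simp add: add.commute)
    then have "(N choose Suc e) * (2 * j + 1) = (e + 2) * (N choose (e + 2))"
      by (simp add: algebra_simps)
    then have key: "real (N choose Suc e) * (2 * j + 1) = (e + 2) * real (N choose (e + 2))"
      by (metis of_nat_mult)
    have "qsum_top_coeff d (Suc N) i = real (Suc N choose Suc e) * real (odd_fact (Suc j)) * d ^ Suc j"
      using 5 by (simp add: qsum_top_coeff_def Suc_diff_le)
    also have "\<dots> = real (N choose Suc e) * (2 * j + 1) * real (odd_fact j) * d ^ Suc j
        + real (N choose e) * real (odd_fact (Suc j)) * d ^ Suc j"
      by (simp add: odd_fact_Suc algebra_simps)
    also have "\<dots> = (2 * real i - real N) * d * qsum_top_coeff d N i + qsum_top_coeff d N (i - 1)"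
      unfolding key using 5 by (simp add: qsum_top_coeff_def numeral_2_eq_2 algebra_simps)
    finally show ?thesis using 5 by simp
  qed
qed

text \<open>The recursion of \<open>qsum_poly\<close> read off at \<open>x\<^sup>i\<close>, with \<open>m\<close> as the polynomial variable:
  the coefficient of \<open>x\<^sup>a\<close> in \<open>(1 - x)\<^sup>r\<^sup>+\<^sup>m\<close> is \<open>(-1)\<^sup>a\<close> times a binomial polynomial in \<open>m\<close> of degree \<open>a\<close>.\<close>

fun qsum_coeff_poly :: "nat \<Rightarrow> nat \<Rightarrow> nat \<Rightarrow> nat \<Rightarrow> real poly" where
  "qsum_coeff_poly r k 0 i = (if i = 0 then 1 else 0)"
| "qsum_coeff_poly r k (Suc N) i =
     pcompose (qsum_coeff_poly r k N i) [:of_nat k, 1:]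
     - (\<Sum>a\<le>i. smult ((-1) ^ a) (pcompose (binom_poly a) [:of_nat r, 1:])
                  * pcompose (qsum_coeff_poly r k N (i - a)) [:of_nat (2 * r), 1:])"

lemma coeff_qsum_poly: "coeff (qsum_poly r k N m) i = poly (qsum_coeff_poly r k N i) (of_nat m)"
proof (induction N arbitrary: m i)
  case 0
  then show ?case by simp
next
  case (Suc N)
  have "coeff ([:1, -1:] ^ (r + m) :: real poly) a
      = poly (smult ((-1) ^ a) (pcompose (binom_poly a) [:of_nat r, 1:])) (of_nat m)" for a
    using poly_binom_poly[of a "m + r", symmetric]
    by (simp add: coeff_one_minus_power poly_pcompose add.commute)
  then show ?case
    by (simp add: coeff_mult Suc.IH poly_sum poly_pcompose add.commute mult.assoc)
qed

lemma top_term_qsum_coeff_poly: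
  "top_term (qsum_coeff_poly r k N i) (2 * int i - int N) (qsum_top_coeff (real k - 2 * real r) N i)"
proof (induction N arbitrary: i)
  case 0
  then show ?case by (auto simp: qsum_top_coeff_def odd_fact_def binomial_eq_0)
next
  case (Suc N)
  define d where "d = real k - 2 * real r"
  define D where "D = 2 * int i - int N"
  define T where "T a = smult ((-1) ^ a) (pcompose (binom_poly a) [:of_nat r, 1:])
                  * pcompose (qsum_coeff_poly r k N (i - a)) [:of_nat (2 * r), 1:]" for a
  have diff: "top_term (pcompose (qsum_coeff_poly r k N i) [:of_nat k, 1:]
      - pcompose (qsum_coeff_poly r k N i) [:of_nat (2 * r), 1:]) (D - 1) (of_int D * d * qsum_top_coeff d N i)"
    using top_term_pcompose_shift_diff[OF Suc.IH[of i]] by (simp add: D_def d_def)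
  have T: "top_term (T a) (D - 1) (if a = 1 then - qsum_top_coeff d N (i - 1) else 0)"
    if "a \<in> {1..i}" for a
    using top_term_binom_poly_mult[OF Suc.IH that] unfolding T_def D_def d_def
    by (cases "a = 1") auto
  have sum_T: "top_term (\<Sum>a\<in>{1..i}. T a) (D - 1) (if i = 0 then 0 else - qsum_top_coeff d N (i - 1))"
  proof -
    have "(\<Sum>a\<in>{1..i}. if a = 1 then - qsum_top_coeff d N (i - 1) else 0)
        = (if i = 0 then 0 else - qsum_top_coeff d N (i - 1))"
      by simp
    then show ?thesis using top_term_sum[of "{1..i}" T "D - 1", OF T] by simp
  qed
  have unfold_Suc: "qsum_coeff_poly r k (Suc N) i = (pcompose (qsum_coeff_poly r k N i) [:of_nat k, 1:]
      - pcompose (qsum_coeff_poly r k N i) [:of_nat (2 * r), 1:]) - (\<Sum>a\<in>{1..i}. T a)"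
  proof -
    have "{..i} = insert 0 {1..i}" by auto
    then show ?thesis by (simp add: T_def binom_poly_def)
  qed
  have "top_term (qsum_coeff_poly r k (Suc N) i) (D - 1)
      (of_int D * d * qsum_top_coeff d N i - (if i = 0 then 0 else - qsum_top_coeff d N (i - 1)))"
    unfolding unfold_Suc by (rule top_term_diff[OF diff sum_T])
  moreover have "D - 1 = 2 * int i - int (Suc N)"
    by (simp add: D_def)
  moreover have "of_int D * d * qsum_top_coeff d N i - (if i = 0 then 0 else - qsum_top_coeff d N (i - 1))
      = qsum_top_coeff (real k - 2 * real r) (Suc N) i"
    by (simp add: D_def d_def qsum_top_coeff_Suc)
  ultimately show ?case by simp
qed

lemma qsum_even_factor:
  assumes "k \<ge> 1"
  obtains R where "\<And>q. \<bar>q\<bar> \<noteq> 1 \<Longrightarrow> qsum r k (2 * n) m q = (1 - q) ^ n * poly R (1 - q)"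
    and "poly R 0 = real (odd_fact n) * (real k - 2 * real r) ^ n"
proof -
  have "coeff (qsum_poly r k (2 * n) m) i = 0" if "i < n" for i
    using top_term_qsum_coeff_poly[of r k "2 * n" i] that
    by (simp add: coeff_qsum_poly top_term_neg)
  then obtain R where R: "qsum_poly r k (2 * n) m = monom 1 n * R"
    using monom_1_dvd_iff' by blast
  have "top_term (qsum_coeff_poly r k (2 * n) n) 0 (real (odd_fact n) * (real k - 2 * real r) ^ n)"
    using top_term_qsum_coeff_poly[of r k "2 * n" n] by (simp add: qsum_top_coeff_def)
  then have "coeff (qsum_poly r k (2 * n) m) n = real (odd_fact n) * (real k - 2 * real r) ^ n"
    by (simp add: coeff_qsum_poly top_term_0_iff)
  with R have "poly R 0 = real (odd_fact n) * (real k - 2 * real r) ^ n"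
    by (simp add: poly_0_coeff_0 coeff_monom_mult)
  moreover have "qsum r k (2 * n) m q = (1 - q) ^ n * poly R (1 - q)" if "\<bar>q\<bar> \<noteq> 1" for q
    using poly_qsum_poly[OF that assms, of r "2 * n" m] R by (simp add: poly_monom)
  ultimately show ?thesis using that by blast
qed

lemma qpoch_odd_powers: "qpoch q (q\<^sup>2) n = (1 - q) ^ n * (\<Prod>j<n. \<Sum>t<2 * j + 1. q ^ t)"
proof -
  have "1 - (q\<^sup>2) ^ j * q = (1 - q) * (\<Sum>t<2 * j + 1. q ^ t)" for j
  proof -
    have "(q\<^sup>2) ^ j * q = q ^ (2 * j + 1)"
      by (simp add: power_mult)
    then show ?thesis by (simp only: one_diff_power_eq)
  qed
  then show ?thesis by (simp add: qpoch_def prod.distrib)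
qed

theorem theorem2p3:
  fixes r m k n :: nat
  assumes "k \<ge> 1"
  shows "((\<lambda>q::real. (\<Sum>j=0..2*n. (-1) ^ j * q ^ (r * j^2 + m * j) * qbinom (2*n) j (q ^ k))
                      / qpoch q (q^2) n)
          \<longlongrightarrow> (real k - 2 * real r) ^ n) (at 1)"
proof -
  obtain R where qsum_R: "\<And>q. \<bar>q\<bar> \<noteq> 1 \<Longrightarrow> qsum r k (2 * n) m q = (1 - q) ^ n * poly R (1 - q)"
    and R0: "poly R 0 = real (odd_fact n) * (real k - 2 * real r) ^ n"
    using qsum_even_factor[OF assms] by blast
  define B where "B q = (\<Prod>j<n. \<Sum>t<2 * j + 1. q ^ t)" for q :: real
  have B1: "B 1 = real (odd_fact n)" and B1_nonzero: "B 1 \<noteq> 0"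
    by (simp_all add: B_def odd_fact_def)
  have "\<forall>\<^sub>F q in at (1::real). 0 < q \<and> q \<noteq> 1"
    unfolding eventually_at by (rule exI[of _ 1]) (auto simp: dist_real_def)
  then have "\<forall>\<^sub>F q in at 1. poly R (1 - q) / B q = qsum r k (2 * n) m q / qpoch q (q\<^sup>2) n"
    by eventually_elim (simp add: qsum_R qpoch_odd_powers B_def)
  moreover have "continuous (at 1) (\<lambda>q. poly R (1 - q) / B q)"
    using B1_nonzero unfolding B_def by (intro continuous_intros) auto
  then have "((\<lambda>q. poly R (1 - q) / B q) \<longlongrightarrow> poly R 0 / B 1) (at 1)"
    by (simp add: continuous_at)
  moreover have "poly R 0 / B 1 = (real k - 2 * real r) ^ n"
    using B1_nonzero by (simp add: R0 B1)
  ultimately show ?thesis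
    unfolding qsum_def by (simp add: tendsto_cong)
qed

end
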